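(* Let $B$ be a skew brace. Then a subset $P\subseteq B$ is an equivalence class of some congruence on $B$ if and only if $P$ is a paragon in $\mathrm{T}(B)$.
   Context: A skew brace is $(B,+,\cdot)$ with $(B,+)$ and $(B,\cdot)$ groups and $a(b+c)=ab-a+ac$. A congruence on $B$ is an equivalence relation compatible with both group operations. $\mathrm{T}(B)$ is $B$ with ternary operation $[a,b,c]=a-b+c$ and the multiplication of $B$. A normal sub-heap is a non-empty subset $S$ closed under $[-,-,-]$ with $[[a,e,s],a,e]\in S$ for all $a$ and $e,s\in S$; $a\sim_S b$ iff $[a,b,s]\in S$ for some (equivalently all) $s\in S$. A sub-heap $S$ is closed if $[ts',ts,s]\in S$ and $[s't,st,s]\in S$ for all $s,s'\in S$, $t$. A paragon is a non-empty normal sub-heap $P$ all of whose $\sim_P$-classes are closed sub-heaps. *)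

theory Defs
  imports "HOL-Algebra.Group"
begin

(* A skew brace: an additive group A (written multiplicatively in HOL-Algebra,
  so a + b is a \<otimes>_A b and -a is inv_A a) and a multiplicative
  group M on the same carrier, satisfying a(b+c) = ab - a + ac. *)

definition skew_brace :: "'a monoid \<Rightarrow> 'a monoid \<Rightarrow> bool" where
  "skew_brace A M \<longleftrightarrow> group A \<and> group M \<and> carrier M = carrier A \<and>
     (\<forall>a\<in>carrier A. \<forall>b\<in>carrier A. \<forall>c\<in>carrier A.
        a \<otimes>\<^bsub>M\<^esub> (b \<otimes>\<^bsub>A\<^esub> c)
          = (a \<otimes>\<^bsub>M\<^esub> b) \<otimes>\<^bsub>A\<^esub> inv\<^bsub>A\<^esub> a \<otimes>\<^bsub>A\<^esub> (a \<otimes>\<^bsub>M\<^esub> c))"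

definition brace_congruence :: "'a monoid \<Rightarrow> 'a monoid \<Rightarrow> 'a rel \<Rightarrow> bool" where
  "brace_congruence A M R \<longleftrightarrow> equiv (carrier A) R \<and>
     (\<forall>a b c d. (a, b) \<in> R \<longrightarrow> (c, d) \<in> R \<longrightarrow>
        (a \<otimes>\<^bsub>A\<^esub> c, b \<otimes>\<^bsub>A\<^esub> d) \<in> R \<and> (a \<otimes>\<^bsub>M\<^esub> c, b \<otimes>\<^bsub>M\<^esub> d) \<in> R)"

definition tern :: "'a monoid \<Rightarrow> 'a \<Rightarrow> 'a \<Rightarrow> 'a \<Rightarrow> 'a" where
  "tern A a b c = a \<otimes>\<^bsub>A\<^esub> inv\<^bsub>A\<^esub> b \<otimes>\<^bsub>A\<^esub> c"

definition sub_heap :: "'a monoid \<Rightarrow> 'a set \<Rightarrow> bool" where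
  "sub_heap A S \<longleftrightarrow> S \<subseteq> carrier A \<and>
     (\<forall>x\<in>S. \<forall>y\<in>S. \<forall>z\<in>S. tern A x y z \<in> S)"

definition normal_sub_heap :: "'a monoid \<Rightarrow> 'a set \<Rightarrow> bool" where
  "normal_sub_heap A S \<longleftrightarrow> S \<noteq> {} \<and> sub_heap A S \<and>
     (\<forall>a\<in>carrier A. \<forall>e\<in>S. \<forall>s\<in>S. tern A (tern A a e s) a e \<in> S)"

definition heap_rel :: "'a monoid \<Rightarrow> 'a set \<Rightarrow> 'a rel" where
  "heap_rel A S = {(a, b). a \<in> carrier A \<and> b \<in> carrier A \<and> (\<exists>s\<in>S. tern A a b s \<in> S)}"

definition closed_sub_heap :: "'a monoid \<Rightarrow> 'a monoid \<Rightarrow> 'a set \<Rightarrow> bool" where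
  "closed_sub_heap A M S \<longleftrightarrow> sub_heap A S \<and>
     (\<forall>s\<in>S. \<forall>s'\<in>S. \<forall>t\<in>carrier A.
        tern A (t \<otimes>\<^bsub>M\<^esub> s') (t \<otimes>\<^bsub>M\<^esub> s) s \<in> S \<and>
        tern A (s' \<otimes>\<^bsub>M\<^esub> t) (s \<otimes>\<^bsub>M\<^esub> t) s \<in> S)"

definition paragon :: "'a monoid \<Rightarrow> 'a monoid \<Rightarrow> 'a set \<Rightarrow> bool" where
  "paragon A M P \<longleftrightarrow> P \<noteq> {} \<and> normal_sub_heap A P \<and>
     (\<forall>C\<in>carrier A // heap_rel A P. closed_sub_heap A M C)"

end

theory Submission
  imports Defs "HOL-Algebra.Coset"
begin

text \<open>Fix \<open>p \<in> P\<close>. For a sub-heap \<open>P\<close>, \<open>a \<sim>\<^sub>P b\<close> holds iff \<open>a - b + p \<in> P\<close>,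
  and when \<open>P\<close> is normal, \<open>N = P - p\<close> is a normal subgroup of \<open>(B,+)\<close>; so \<open>\<sim>\<^sub>P\<close> is the
  congruence of \<open>(B,+)\<close> belonging to \<open>N\<close>, and \<open>P = N + p\<close> is one of its classes.
  Conversely, a congruence of \<open>(B,+)\<close> has normal sub-heaps as classes and \<open>\<sim>\<close> of any class is
  the congruence itself, since \<open>[u,v,s] \<sim> s\<close> iff \<open>u \<sim> v\<close>. The same equivalence shows that a
  congruence of \<open>(B,+)\<close> is compatible with the multiplication iff all its classes are closed:
  \<open>[ts',ts,s]\<close> lies in the class of \<open>s\<close> iff \<open>ts' \<sim> ts\<close>.
  Only the two group structures on the common carrier are used, not the brace law.\<close>

definition group_congruence :: "'a monoid \<Rightarrow> 'a rel \<Rightarrow> bool" where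
  "group_congruence G R \<longleftrightarrow> equiv (carrier G) R \<and>
     (\<forall>a b c d. (a, b) \<in> R \<longrightarrow> (c, d) \<in> R \<longrightarrow> (a \<otimes>\<^bsub>G\<^esub> c, b \<otimes>\<^bsub>G\<^esub> d) \<in> R)"

lemma brace_congruence_iff_group_congruence:
  "brace_congruence A M R \<longleftrightarrow> group_congruence A R \<and>
    (\<forall>a b c d. (a, b) \<in> R \<longrightarrow> (c, d) \<in> R \<longrightarrow> (a \<otimes>\<^bsub>M\<^esub> c, b \<otimes>\<^bsub>M\<^esub> d) \<in> R)"
  by (auto simp: brace_congruence_def group_congruence_def)

lemma quotient_mem_iff:
  assumes r: "equiv A r" and X: "X \<in> A // r" and s: "s \<in> X"
  shows "y \<in> X \<longleftrightarrow> (y, s) \<in> r"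
proof
  assume "y \<in> X"
  then show "(y, s) \<in> r" using in_quotient_imp_in_rel[OF r X] s by blast
next
  assume "(y, s) \<in> r"
  then have "(s, y) \<in> r" using r by (meson equivE symD)
  then show "y \<in> X" using in_quotient_imp_closed[OF r X s] by blast
qed

lemma sub_heapD:
  assumes "sub_heap G P"
  shows sub_heap_subset: "P \<subseteq> carrier G"
    and sub_heap_tern: "x \<in> P \<Longrightarrow> y \<in> P \<Longrightarrow> z \<in> P \<Longrightarrow> tern G x y z \<in> P"
  using assms by (auto simp: sub_heap_def)

text \<open>The heap notions of the definitions are stated for \<open>'a monoid\<close> rather than for the
  record scheme of HOL-Algebra, hence this copy of the \<open>group\<close> locale.\<close>

locale group_heap = group G for G :: "'a monoid" (structure)
begin

lemma mult_inv_cancel_left [simp]: "x \<in> carrier G \<Longrightarrow> y \<in> carrier G \<Longrightarrow> x \<otimes> (inv x \<otimes> y) = y"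
  by (simp add: m_assoc[symmetric])

lemma inv_mult_cancel_left [simp]: "x \<in> carrier G \<Longrightarrow> y \<in> carrier G \<Longrightarrow> inv x \<otimes> (x \<otimes> y) = y"
  by (simp add: m_assoc[symmetric])

lemma tern_closed [simp]:
  "a \<in> carrier G \<Longrightarrow> b \<in> carrier G \<Longrightarrow> c \<in> carrier G \<Longrightarrow> tern G a b c \<in> carrier G"
  by (simp add: tern_def)

lemma tern_cancel_left: "a \<in> carrier G \<Longrightarrow> c \<in> carrier G \<Longrightarrow> tern G a a c = c"
  by (simp add: tern_def)

lemma tern_cancel_right: "a \<in> carrier G \<Longrightarrow> c \<in> carrier G \<Longrightarrow> tern G a c c = a"
  by (simp add: tern_def m_assoc)

lemma tern_tern_cancel:
  "a \<in> carrier G \<Longrightarrow> b \<in> carrier G \<Longrightarrow> c \<in> carrier G \<Longrightarrow> tern G (tern G a b c) c b = a"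
  by (simp add: tern_def m_assoc)

end

locale group_heap_congruence = group_heap +
  fixes R :: "'a rel"
  assumes group_congruence: "group_congruence G R"
begin

lemma cong_equiv: "equiv (carrier G) R"
  using group_congruence by (simp add: group_congruence_def)

lemma cong_mult: "(a, b) \<in> R \<Longrightarrow> (c, d) \<in> R \<Longrightarrow> (a \<otimes> c, b \<otimes> d) \<in> R"
  using group_congruence by (simp add: group_congruence_def)

lemma cong_carrier_left: "(a, b) \<in> R \<Longrightarrow> a \<in> carrier G"
  and cong_carrier_right: "(a, b) \<in> R \<Longrightarrow> b \<in> carrier G"
  using equiv_type[OF cong_equiv] by blast+

lemma cong_refl: "a \<in> carrier G \<Longrightarrow> (a, a) \<in> R"
  using cong_equiv by (meson equivE refl_onD)

lemma cong_sym: "(a, b) \<in> R \<Longrightarrow> (b, a) \<in> R"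
  using cong_equiv by (meson equivE symD)

lemma cong_trans: "(a, b) \<in> R \<Longrightarrow> (b, c) \<in> R \<Longrightarrow> (a, c) \<in> R"
  using cong_equiv by (meson equivE transD)

lemma cong_inv:
  assumes "(a, b) \<in> R"
  shows "(inv a, inv b) \<in> R"
proof -
  have a: "a \<in> carrier G" and b: "b \<in> carrier G"
    using assms by (rule cong_carrier_left, rule cong_carrier_right)
  have "(inv a \<otimes> (b \<otimes> inv b), inv a \<otimes> (a \<otimes> inv b)) \<in> R"
    using cong_sym[OF assms] a b by (intro cong_mult cong_refl) auto
  then show ?thesis
    using a b by (simp add: m_assoc[symmetric])
qed

lemma cong_tern:
  "(a, a') \<in> R \<Longrightarrow> (b, b') \<in> R \<Longrightarrow> (c, c') \<in> R \<Longrightarrow> (tern G a b c, tern G a' b' c') \<in> R"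
  unfolding tern_def by (intro cong_mult cong_inv)

lemma tern_related_iff:
  assumes "u \<in> carrier G" "v \<in> carrier G" "s \<in> carrier G"
  shows "(tern G u v s, s) \<in> R \<longleftrightarrow> (u, v) \<in> R"
proof
  assume "(tern G u v s, s) \<in> R"
  then have "(tern G (tern G u v s) s v, tern G s s v) \<in> R"
    using assms by (intro cong_tern cong_refl) auto
  then show "(u, v) \<in> R"
    using assms by (simp add: tern_tern_cancel tern_cancel_left)
next
  assume "(u, v) \<in> R"
  then have "(tern G u v s, tern G v v s) \<in> R"
    using assms by (intro cong_tern cong_refl)
  then show "(tern G u v s, s) \<in> R"
    using assms by (simp add: tern_cancel_left)
qed

context
  fixes C assumes C: "C \<in> carrier G // R"
begin

lemma class_subset_carrier: "C \<subseteq> carrier G"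
  using in_quotient_imp_subset[OF cong_equiv C] .

lemma class_related: "x \<in> C \<Longrightarrow> y \<in> C \<Longrightarrow> (x, y) \<in> R"
  using in_quotient_imp_in_rel[OF cong_equiv C] by blast

lemma tern_in_class_iff:
  assumes "s \<in> C" "u \<in> carrier G" "v \<in> carrier G"
  shows "tern G u v s \<in> C \<longleftrightarrow> (u, v) \<in> R"
  using assms class_subset_carrier tern_related_iff quotient_mem_iff[OF cong_equiv C \<open>s \<in> C\<close>]
  by auto

lemma heap_rel_class: "heap_rel G C = R"
proof (intro subset_antisym subrelI)
  fix u v assume "(u, v) \<in> heap_rel G C"
  then obtain s where "u \<in> carrier G" "v \<in> carrier G" "s \<in> C" "tern G u v s \<in> C"
    by (auto simp: heap_rel_def)
  then show "(u, v) \<in> R" by (simp add: tern_in_class_iff)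
next
  fix u v assume uv: "(u, v) \<in> R"
  obtain s where s: "s \<in> C"
    using in_quotient_imp_non_empty[OF cong_equiv C] by blast
  have u: "u \<in> carrier G" and v: "v \<in> carrier G"
    using uv by (rule cong_carrier_left, rule cong_carrier_right)
  then have "tern G u v s \<in> C"
    using uv s by (simp add: tern_in_class_iff)
  then show "(u, v) \<in> heap_rel G C"
    using u v s by (auto simp: heap_rel_def)
qed

lemma normal_sub_heap_class: "normal_sub_heap G C"
proof -
  have "tern G x y z \<in> C" if "x \<in> C" "y \<in> C" "z \<in> C" for x y z
  proof -
    have "x \<in> carrier G" "y \<in> carrier G"
      using that class_subset_carrier by auto
    then show ?thesis
      using tern_in_class_iff[OF that(3)] class_related[OF that(1,2)] by simp
  qed
  then have "sub_heap G C"
    unfolding sub_heap_def using class_subset_carrier by blast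
  moreover have "tern G (tern G a e s) a e \<in> C" if "a \<in> carrier G" "e \<in> C" "s \<in> C" for a e s
  proof -
    have e: "e \<in> carrier G" and s: "s \<in> carrier G"
      using that class_subset_carrier by auto
    have "(tern G a e s, tern G a e e) \<in> R"
      using that e s class_related by (intro cong_tern cong_refl) auto
    then show ?thesis
      using tern_in_class_iff[OF \<open>e \<in> C\<close>] that e s by (simp add: tern_cancel_right)
  qed
  ultimately show ?thesis
    unfolding normal_sub_heap_def using in_quotient_imp_non_empty[OF cong_equiv C] by blast
qed

lemma closed_sub_heap_class_iff:
  assumes M_closed: "\<forall>x\<in>carrier G. \<forall>y\<in>carrier G. x \<otimes>\<^bsub>M\<^esub> y \<in> carrier G"
  shows "closed_sub_heap G M C \<longleftrightarrow> (\<forall>s\<in>C. \<forall>s'\<in>C. \<forall>t\<in>carrier G.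
    (t \<otimes>\<^bsub>M\<^esub> s', t \<otimes>\<^bsub>M\<^esub> s) \<in> R \<and> (s' \<otimes>\<^bsub>M\<^esub> t, s \<otimes>\<^bsub>M\<^esub> t) \<in> R)"
proof -
  have "sub_heap G C"
    using normal_sub_heap_class by (simp add: normal_sub_heap_def)
  moreover have "tern G (t \<otimes>\<^bsub>M\<^esub> s') (t \<otimes>\<^bsub>M\<^esub> s) s \<in> C \<and> tern G (s' \<otimes>\<^bsub>M\<^esub> t) (s \<otimes>\<^bsub>M\<^esub> t) s \<in> C
      \<longleftrightarrow> (t \<otimes>\<^bsub>M\<^esub> s', t \<otimes>\<^bsub>M\<^esub> s) \<in> R \<and> (s' \<otimes>\<^bsub>M\<^esub> t, s \<otimes>\<^bsub>M\<^esub> t) \<in> R"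
    if "s \<in> C" "s' \<in> C" "t \<in> carrier G" for s s' t
  proof -
    have "s \<in> carrier G" "s' \<in> carrier G"
      using that class_subset_carrier by auto
    then show ?thesis
      using tern_in_class_iff[OF that(1)] that(3) M_closed by simp
  qed
  ultimately show ?thesis
    unfolding closed_sub_heap_def by blast
qed

end

lemma mult_compatible_iff_closed_classes:
  assumes M_closed: "\<forall>x\<in>carrier G. \<forall>y\<in>carrier G. x \<otimes>\<^bsub>M\<^esub> y \<in> carrier G"
  shows "(\<forall>a b c d. (a, b) \<in> R \<longrightarrow> (c, d) \<in> R \<longrightarrow> (a \<otimes>\<^bsub>M\<^esub> c, b \<otimes>\<^bsub>M\<^esub> d) \<in> R)
    \<longleftrightarrow> (\<forall>C \<in> carrier G // R. closed_sub_heap G M C)"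
proof
  assume compatible: "\<forall>a b c d. (a, b) \<in> R \<longrightarrow> (c, d) \<in> R \<longrightarrow> (a \<otimes>\<^bsub>M\<^esub> c, b \<otimes>\<^bsub>M\<^esub> d) \<in> R"
  show "\<forall>C \<in> carrier G // R. closed_sub_heap G M C"
  proof
    fix C assume C: "C \<in> carrier G // R"
    show "closed_sub_heap G M C"
      unfolding closed_sub_heap_class_iff[OF C M_closed]
    proof (intro ballI)
      fix s s' t assume "s \<in> C" "s' \<in> C" "t \<in> carrier G"
      then have "(s', s) \<in> R" "(t, t) \<in> R"
        using class_related[OF C] cong_refl by auto
      then show "(t \<otimes>\<^bsub>M\<^esub> s', t \<otimes>\<^bsub>M\<^esub> s) \<in> R \<and> (s' \<otimes>\<^bsub>M\<^esub> t, s \<otimes>\<^bsub>M\<^esub> t) \<in> R"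
        using compatible by blast
    qed
  qed
next
  assume closed: "\<forall>C \<in> carrier G // R. closed_sub_heap G M C"
  have one_sided: "(t \<otimes>\<^bsub>M\<^esub> x, t \<otimes>\<^bsub>M\<^esub> y) \<in> R \<and> (x \<otimes>\<^bsub>M\<^esub> t, y \<otimes>\<^bsub>M\<^esub> t) \<in> R"
    if xy: "(x, y) \<in> R" and t: "t \<in> carrier G" for x y t
  proof -
    have y: "y \<in> carrier G" using xy by (rule cong_carrier_right)
    have C: "R `` {y} \<in> carrier G // R" using y by (rule quotientI)
    have "x \<in> R `` {y}" "y \<in> R `` {y}" using cong_sym[OF xy] cong_refl[OF y] by auto
    moreover have "closed_sub_heap G M (R `` {y})" using closed C by blast
    ultimately show ?thesis
      using t unfolding closed_sub_heap_class_iff[OF C M_closed] by blast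
  qed
  show "\<forall>a b c d. (a, b) \<in> R \<longrightarrow> (c, d) \<in> R \<longrightarrow> (a \<otimes>\<^bsub>M\<^esub> c, b \<otimes>\<^bsub>M\<^esub> d) \<in> R"
  proof (intro allI impI)
    fix a b c d assume ab: "(a, b) \<in> R" and cd: "(c, d) \<in> R"
    have "(a \<otimes>\<^bsub>M\<^esub> c, a \<otimes>\<^bsub>M\<^esub> d) \<in> R"
      using one_sided[OF cd cong_carrier_left[OF ab]] by blast
    moreover have "(a \<otimes>\<^bsub>M\<^esub> d, b \<otimes>\<^bsub>M\<^esub> d) \<in> R"
      using one_sided[OF ab cong_carrier_right[OF cd]] by blast
    ultimately show "(a \<otimes>\<^bsub>M\<^esub> c, b \<otimes>\<^bsub>M\<^esub> d) \<in> R" by (rule cong_trans)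
  qed
qed

end

lemma group_heap_congruenceI:
  "group G \<Longrightarrow> group_congruence G R \<Longrightarrow> group_heap_congruence G R"
  by (intro group_heap_congruence.intro group_heap.intro group_heap_congruence_axioms.intro)

context group_heap
begin

lemma normal_subgroup_group_congruence:
  assumes "N \<lhd> G"
  shows "group_congruence G {(a, b). a \<in> carrier G \<and> b \<in> carrier G \<and> a \<otimes> inv b \<in> N}"
    (is "group_congruence G ?R")
proof -
  interpret N: normal N G by fact
  have "equiv (carrier G) ?R"
  proof (rule equivI)
    show "?R \<subseteq> carrier G \<times> carrier G"
      by auto
    show "refl_on (carrier G) ?R"
      by (auto simp: refl_on_def N.one_closed)
    show "sym ?R"
    proof (rule symI)
      fix a b assume "(a, b) \<in> ?R"
      then have "inv (a \<otimes> inv b) \<in> N" and carr: "a \<in> carrier G" "b \<in> carrier G" by auto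
      moreover have "inv (a \<otimes> inv b) = b \<otimes> inv a" using carr by (simp add: inv_mult_group)
      ultimately show "(b, a) \<in> ?R" by simp
    qed
    show "trans ?R"
    proof (rule transI)
      fix a b c assume "(a, b) \<in> ?R" "(b, c) \<in> ?R"
      then have "(a \<otimes> inv b) \<otimes> (b \<otimes> inv c) \<in> N" and carr: "a \<in> carrier G" "b \<in> carrier G" "c \<in> carrier G"
        by auto
      moreover have "(a \<otimes> inv b) \<otimes> (b \<otimes> inv c) = a \<otimes> inv c" using carr by (simp add: m_assoc)
      ultimately show "(a, c) \<in> ?R" using carr by simp
    qed
  qed
  moreover have "(a \<otimes> c, b \<otimes> d) \<in> ?R" if "(a, b) \<in> ?R" "(c, d) \<in> ?R" for a b c d
  proof -
    have carr: "a \<in> carrier G" "b \<in> carrier G" "c \<in> carrier G" "d \<in> carrier G"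
      and ab: "a \<otimes> inv b \<in> N" and cd: "c \<otimes> inv d \<in> N"
      using that by auto
    have "(a \<otimes> c) \<otimes> inv (b \<otimes> d) = (a \<otimes> inv b) \<otimes> (b \<otimes> (c \<otimes> inv d) \<otimes> inv b)"
      using carr by (simp add: m_assoc inv_mult_group)
    also have "\<dots> \<in> N"
      using ab cd carr by (simp add: N.m_closed N.inv_op_closed2)
    finally show ?thesis using carr by simp
  qed
  ultimately show ?thesis
    unfolding group_congruence_def by blast
qed

lemma heap_rel_iff:
  assumes P: "sub_heap G P" and p: "p \<in> P"
  shows "(a, b) \<in> heap_rel G P \<longleftrightarrow> a \<in> carrier G \<and> b \<in> carrier G \<and> tern G a b p \<in> P"
proof
  assume "(a, b) \<in> heap_rel G P"
  then obtain s where carr: "a \<in> carrier G" "b \<in> carrier G" and s: "s \<in> P" "tern G a b s \<in> P"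
    by (auto simp: heap_rel_def)
  then have "tern G (tern G a b s) s p \<in> P"
    using P p by (simp add: sub_heap_tern)
  moreover have "tern G (tern G a b s) s p = tern G a b p"
    using carr s p sub_heap_subset[OF P] by (auto simp: tern_def m_assoc)
  ultimately show "a \<in> carrier G \<and> b \<in> carrier G \<and> tern G a b p \<in> P"
    using carr by simp
qed (use p in \<open>auto simp: heap_rel_def\<close>)

lemma sub_heap_in_quotient:
  assumes P: "sub_heap G P" and "P \<noteq> {}"
  shows "P \<in> carrier G // heap_rel G P"
proof -
  obtain p where p: "p \<in> P" using assms(2) by blast
  have pc: "p \<in> carrier G" using p sub_heap_subset[OF P] by blast
  have "x \<in> P \<longleftrightarrow> (p, x) \<in> heap_rel G P" for x
  proof
    assume x: "x \<in> P"
    then have "x \<in> carrier G"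
      using sub_heap_subset[OF P] by blast
    then show "(p, x) \<in> heap_rel G P"
      unfolding heap_rel_iff[OF P p] using pc sub_heap_tern[OF P p x p] by blast
  next
    assume "(p, x) \<in> heap_rel G P"
    then have x: "x \<in> carrier G" and "tern G p x p \<in> P"
      by (simp_all add: heap_rel_iff[OF P p])
    then have "tern G p (tern G p x p) p \<in> P"
      using p by (simp add: sub_heap_tern[OF P])
    moreover have "tern G p (tern G p x p) p = x"
      using x pc by (simp add: tern_def m_assoc inv_mult_group)
    ultimately show "x \<in> P" by simp
  qed
  then have "P = heap_rel G P `` {p}" by auto
  with quotientI[OF pc] show ?thesis by metis
qed

lemma normal_sub_heap_translate_normal:
  assumes P: "normal_sub_heap G P" and p: "p \<in> P"
  shows "{x \<in> carrier G. x \<otimes> p \<in> P} \<lhd> G"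
proof -
  have sh: "sub_heap G P"
    and normal: "\<And>a e s. a \<in> carrier G \<Longrightarrow> e \<in> P \<Longrightarrow> s \<in> P \<Longrightarrow> tern G (tern G a e s) a e \<in> P"
    using P by (auto simp: normal_sub_heap_def)
  have pc: "p \<in> carrier G" using p sub_heap_subset[OF sh] by blast
  let ?N = "{x \<in> carrier G. x \<otimes> p \<in> P}"
  have "subgroup ?N G"
  proof (rule subgroupI)
    have "\<one> \<in> ?N" using p pc by simp
    then show "?N \<noteq> {}" by blast
    show "inv x \<in> ?N" if "x \<in> ?N" for x
      using sub_heap_tern[OF sh p _ p, of "x \<otimes> p"] that pc by (simp add: tern_def m_assoc inv_mult_group)
    show "x \<otimes> y \<in> ?N" if "x \<in> ?N" "y \<in> ?N" for x y
      using sub_heap_tern[OF sh _ p, of "x \<otimes> p" "y \<otimes> p"] that pc by (simp add: tern_def m_assoc)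
  qed auto
  moreover have "a \<otimes> x \<otimes> inv a \<in> ?N" if "a \<in> carrier G" "x \<in> ?N" for a x
    using normal[of "a \<otimes> p" p "x \<otimes> p"] p that pc by (simp add: tern_def m_assoc inv_mult_group)
  ultimately show ?thesis
    unfolding normal_inv_iff by blast
qed

lemma normal_sub_heap_group_congruence:
  assumes P: "normal_sub_heap G P"
  shows "group_congruence G (heap_rel G P)"
proof -
  obtain p where p: "p \<in> P" using P by (auto simp: normal_sub_heap_def)
  have "sub_heap G P" using P by (simp add: normal_sub_heap_def)
  then have "heap_rel G P =
      {(a, b). a \<in> carrier G \<and> b \<in> carrier G \<and> a \<otimes> inv b \<in> {x \<in> carrier G. x \<otimes> p \<in> P}}"
    using heap_rel_iff[OF _ p] by (auto simp: tern_def)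
  then show ?thesis
    using normal_subgroup_group_congruence[OF normal_sub_heap_translate_normal[OF P p]] by simp
qed

end

lemma brace_congruence_iff_closed_classes:
  assumes "group A" "group M" "carrier M = carrier A"
  shows "brace_congruence A M R \<longleftrightarrow>
    group_congruence A R \<and> (\<forall>C \<in> carrier A // R. closed_sub_heap A M C)"
proof -
  have M_closed: "\<forall>x\<in>carrier A. \<forall>y\<in>carrier A. x \<otimes>\<^bsub>M\<^esub> y \<in> carrier A"
    using monoid.m_closed[OF group.is_monoid[OF assms(2)]] assms(3) by simp
  show ?thesis
  proof (cases "group_congruence A R")
    case True
    interpret group_heap_congruence A R
      by (rule group_heap_congruenceI[OF assms(1) True])
    show ?thesis
      using mult_compatible_iff_closed_classes[OF M_closed] True
      by (simp add: brace_congruence_iff_group_congruence)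
  qed (simp add: brace_congruence_iff_group_congruence)
qed

theorem corollary3p17:
  fixes A M :: "'a monoid" and P :: "'a set"
  assumes "skew_brace A M"
    and "P \<subseteq> carrier A"
  shows "(\<exists>R. brace_congruence A M R \<and> P \<in> carrier A // R) \<longleftrightarrow> paragon A M P"
proof -
  have A: "group A" and M: "group M" and carr: "carrier M = carrier A"
    using assms(1) by (simp_all add: skew_brace_def)
  interpret A: group_heap A by (rule group_heap.intro) fact
  note congruence_iff = brace_congruence_iff_closed_classes[OF A M carr]
  show ?thesis
  proof
    assume "\<exists>R. brace_congruence A M R \<and> P \<in> carrier A // R"
    then obtain R where R: "brace_congruence A M R" and P: "P \<in> carrier A // R" by blast
    then have "group_congruence A R" and closed: "\<forall>C \<in> carrier A // R. closed_sub_heap A M C"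
      using congruence_iff by auto
    interpret group_heap_congruence A R
      by (rule group_heap_congruenceI) fact+
    show "paragon A M P"
      unfolding paragon_def heap_rel_class[OF P]
      using normal_sub_heap_class[OF P] closed by (simp add: normal_sub_heap_def)
  next
    assume "paragon A M P"
    then have P: "normal_sub_heap A P" and "\<forall>C \<in> carrier A // heap_rel A P. closed_sub_heap A M C"
      by (auto simp: paragon_def)
    then have "brace_congruence A M (heap_rel A P)"
      using congruence_iff A.normal_sub_heap_group_congruence by blast
    moreover have "P \<in> carrier A // heap_rel A P"
      using P by (auto simp: normal_sub_heap_def intro: A.sub_heap_in_quotient)
    ultimately show "\<exists>R. brace_congruence A M R \<and> P \<in> carrier A // R" by blast
  qed
qed

end
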